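(* Let $\ell_1$ and $\ell_2$ be log-scales on topological spaces $X_1$ and $X_2$, respectively. Suppose that $X_1$ is compact and that $\ell_2$ is positive. If $f:X_1\to X_2$ is locally Lipschitz, then $f$ is Lipschitz.
   Context: A log-scale on a set $X$ is a function $\ell:X\times X\to\mathbb{R}\cup\{\infty\}$ such that $\ell(x,y)=\ell(y,x)$, $\ell(x,y)=+\infty$ iff $x=y$, and for some $\delta\ge0$, $\ell(x,z)\ge\min(\ell(x,y),\ell(y,z))-\delta$ for all $x,y,z$. When a log-scale is given on a topological space, it is assumed that the topology it defines (i.e. the topology of a metric $|\cdot|$ satisfying $c^{-1}\alpha^{\ell(x,y)}\le |x-y|\le c\alpha^{\ell(x,y)}$ for some constants $0<\alpha<1$, $c>1$) coincides with the given topology. A log-scale is positive if all its values are positive. A map $f:X_1\to X_2$ is Lipschitz if there is $n>0$ with $\ell_2(f(x),f(y))\ge\ell_1(x,y)-n$ for all $x,y\in X_1$; it is locally Lipschitz if every $x\in X_1$ has a neighborhood $U$ such that $f|_U$ is Lipschitz. *)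

theory Defs
  imports "HOL-Analysis.Analysis"
begin

definition log_scale :: "'a topology \<Rightarrow> ('a \<Rightarrow> 'a \<Rightarrow> ereal) \<Rightarrow> bool" where
  "log_scale X l \<longleftrightarrow>
     (\<forall>x\<in>topspace X. \<forall>y\<in>topspace X. l x y = l y x \<and> l x y \<noteq> -\<infinity>
        \<and> (l x y = \<infinity> \<longleftrightarrow> x = y))
   \<and> (\<exists>\<delta>::real. \<delta> \<ge> 0 \<and> (\<forall>x\<in>topspace X. \<forall>y\<in>topspace X. \<forall>z\<in>topspace X.
        l x z \<ge> min (l x y) (l y z) - ereal \<delta>))"

text \<open>The log-scale defines the given topology: there is a metric d with
  c^-1 alpha^l \<le> d \<le> c alpha^l (alpha^infinity = 0) whose topology is X.\<close>
definition log_scale_compatible :: "'a topology \<Rightarrow> ('a \<Rightarrow> 'a \<Rightarrow> ereal) \<Rightarrow> bool" where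
  "log_scale_compatible X l \<longleftrightarrow>
     (\<exists>d \<alpha> (c::real). Metric_space (topspace X) d \<and> 0 < \<alpha> \<and> \<alpha> < 1 \<and> c > 1
        \<and> Metric_space.mtopology (topspace X) d = X
        \<and> (\<forall>x\<in>topspace X. \<forall>y\<in>topspace X. x \<noteq> y \<longrightarrow>
              inverse c * \<alpha> powr real_of_ereal (l x y) \<le> d x y
            \<and> d x y \<le> c * \<alpha> powr real_of_ereal (l x y)))"

definition log_scale_on :: "'a topology \<Rightarrow> ('a \<Rightarrow> 'a \<Rightarrow> ereal) \<Rightarrow> bool" where
  "log_scale_on X l \<longleftrightarrow> log_scale X l \<and> log_scale_compatible X l"

definition positive_log_scale :: "'a topology \<Rightarrow> ('a \<Rightarrow> 'a \<Rightarrow> ereal) \<Rightarrow> bool" where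
  "positive_log_scale X l \<longleftrightarrow> (\<forall>x\<in>topspace X. \<forall>y\<in>topspace X. l x y > 0)"

definition lipschitz_ls_on ::
  "'a set \<Rightarrow> ('a \<Rightarrow> 'a \<Rightarrow> ereal) \<Rightarrow> ('b \<Rightarrow> 'b \<Rightarrow> ereal) \<Rightarrow> ('a \<Rightarrow> 'b) \<Rightarrow> bool" where
  "lipschitz_ls_on U l1 l2 f \<longleftrightarrow>
     (\<exists>n::real. n > 0 \<and> (\<forall>x\<in>U. \<forall>y\<in>U. l2 (f x) (f y) \<ge> l1 x y - ereal n))"

definition locally_lipschitz_ls ::
  "'a topology \<Rightarrow> ('a \<Rightarrow> 'a \<Rightarrow> ereal) \<Rightarrow> ('b \<Rightarrow> 'b \<Rightarrow> ereal) \<Rightarrow> ('a \<Rightarrow> 'b) \<Rightarrow> bool" where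
  "locally_lipschitz_ls X1 l1 l2 f \<longleftrightarrow>
     (\<forall>x\<in>topspace X1. \<exists>U. openin X1 U \<and> x \<in> U \<and> lipschitz_ls_on U l1 l2 f)"

end

theory Submission
  imports Defs
begin

text \<open>By compactness, finitely many open sets on which f is Lipschitz cover X1, and they share
  a common constant n. Since the metric of X1 is comparable to alpha^l1, a Lebesgue number of
  this cover yields a threshold L such that any two points with l1 x y \<ge> L lie in a common
  member of the cover. For the remaining pairs l1 x y < L, so l1 x y - (n + |L|) \<le> 0, which
  is below l2 (f x) (f y) because l2 is positive.\<close>

lemma powr_mult_less_eventually:
  fixes \<alpha> c \<epsilon> :: real
  assumes "0 < \<alpha>" "\<alpha> < 1" "0 < c" "0 < \<epsilon>"
  shows "\<exists>L. \<forall>r\<ge>L. c * \<alpha> powr r < \<epsilon>"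
proof (intro exI allI impI)
  fix r assume "log \<alpha> (\<epsilon> / c) + 1 \<le> r"
  then have "\<alpha> powr r \<le> \<alpha> powr (log \<alpha> (\<epsilon> / c) + 1)"
    using assms by (simp add: powr_mono')
  also have "\<dots> < \<alpha> powr log \<alpha> (\<epsilon> / c)"
    using assms by (intro powr_less_mono') auto
  also have "\<dots> = \<epsilon> / c"
    using assms by simp
  finally show "c * \<alpha> powr r < \<epsilon>"
    using assms by (simp add: field_simps)
qed

lemma log_scale_finite_off_diagonal:
  assumes "log_scale X l" "x \<in> topspace X" "y \<in> topspace X" "x \<noteq> y"
  shows "\<bar>l x y\<bar> \<noteq> \<infinity>"
  using assms unfolding log_scale_def by auto

lemma log_scale_lebesgue_number:
  assumes "log_scale_on X l" "compact_space X"
    and "\<And>U. U \<in> \<C> \<Longrightarrow> openin X U" "topspace X \<subseteq> \<Union>\<C>"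
  shows "\<exists>L::real. \<forall>x\<in>topspace X. \<forall>y\<in>topspace X.
           ereal L \<le> l x y \<longrightarrow> (\<exists>U\<in>\<C>. x \<in> U \<and> y \<in> U)"
proof -
  obtain d \<alpha> c where ms: "Metric_space (topspace X) d" and \<alpha>: "0 < \<alpha>" "\<alpha> < 1"
    and c: "(c::real) > 1" and top: "Metric_space.mtopology (topspace X) d = X"
    and upper: "\<And>x y. \<lbrakk>x \<in> topspace X; y \<in> topspace X; x \<noteq> y\<rbrakk> \<Longrightarrow>
                  d x y \<le> c * \<alpha> powr real_of_ereal (l x y)"
    using assms(1) unfolding log_scale_on_def log_scale_compatible_def by metis
  interpret M: Metric_space "topspace X" d by (rule ms)
  obtain \<epsilon> where "\<epsilon> > 0" and \<epsilon>: "\<And>x. x \<in> topspace X \<Longrightarrow> \<exists>U\<in>\<C>. M.mball x \<epsilon> \<subseteq> U"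
    using M.lebesgue_number[of "topspace X" \<C>] assms(2-4) top
    by (auto simp: compact_space_def)
  obtain L where L: "\<And>r. r \<ge> L \<Longrightarrow> c * \<alpha> powr r < \<epsilon>"
    using powr_mult_less_eventually[OF \<alpha>, of c \<epsilon>] c \<open>\<epsilon> > 0\<close> by auto
  have "\<exists>U\<in>\<C>. x \<in> U \<and> y \<in> U"
    if x: "x \<in> topspace X" and y: "y \<in> topspace X" and "ereal L \<le> l x y" for x y
  proof -
    have "d x y < \<epsilon>"
    proof (cases "x = y")
      case False
      have "\<bar>l x y\<bar> \<noteq> \<infinity>"
        using log_scale_finite_off_diagonal[OF _ x y False] assms(1)
        by (simp add: log_scale_on_def)
      then obtain r where r: "l x y = ereal r"
        by (cases "l x y") auto
      then show ?thesis
        using upper[OF x y False] L[of r] \<open>ereal L \<le> l x y\<close> by simp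
    qed (use \<open>\<epsilon> > 0\<close> x in simp)
    then have "x \<in> M.mball x \<epsilon>" "y \<in> M.mball x \<epsilon>"
      using x y \<open>\<epsilon> > 0\<close> by auto
    then show ?thesis
      using \<epsilon>[OF x] by blast
  qed
  then show ?thesis by blast
qed

lemma lipschitz_ls_on_common_constant:
  assumes "finite \<F>" "\<And>U. U \<in> \<F> \<Longrightarrow> lipschitz_ls_on U l1 l2 f"
  shows "\<exists>n::real. n > 0 \<and> (\<forall>U\<in>\<F>. \<forall>x\<in>U. \<forall>y\<in>U. l1 x y - ereal n \<le> l2 (f x) (f y))"
proof -
  obtain N where N: "\<And>U. U \<in> \<F> \<Longrightarrow> N U > 0 \<and>
      (\<forall>x\<in>U. \<forall>y\<in>U. l1 x y - ereal (N U) \<le> l2 (f x) (f y))"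
    using assms(2) unfolding lipschitz_ls_on_def by metis
  have N_le: "N U \<le> (\<Sum>V\<in>\<F>. N V)" if "U \<in> \<F>" for U
    using assms(1) that N by (intro member_le_sum) (auto simp: less_imp_le)
  have "0 \<le> (\<Sum>V\<in>\<F>. N V)"
    using N by (intro sum_nonneg) (auto simp: less_imp_le)
  moreover have "l1 x y - ereal (1 + (\<Sum>V\<in>\<F>. N V)) \<le> l2 (f x) (f y)"
    if "U \<in> \<F>" "x \<in> U" "y \<in> U" for U x y
  proof -
    have "l1 x y - ereal (1 + (\<Sum>V\<in>\<F>. N V)) \<le> l1 x y - ereal (N U)"
      using N_le[OF \<open>U \<in> \<F>\<close>] by (intro ereal_minus_mono) auto
    also have "\<dots> \<le> l2 (f x) (f y)"
      using N that by blast
    finally show ?thesis .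
  qed
  ultimately show ?thesis
    by (intro exI[of _ "1 + (\<Sum>V\<in>\<F>. N V)"]) auto
qed

lemma lipschitz_ls_on_if_large_scales:
  fixes n L :: real
  assumes "n > 0"
    and "\<And>x y. \<lbrakk>x \<in> S; y \<in> S; ereal L \<le> l1 x y\<rbrakk> \<Longrightarrow> l1 x y - ereal n \<le> l2 (f x) (f y)"
    and "\<And>x y. \<lbrakk>x \<in> S; y \<in> S\<rbrakk> \<Longrightarrow> 0 < l2 (f x) (f y)"
  shows "lipschitz_ls_on S l1 l2 f"
  unfolding lipschitz_ls_on_def
proof (intro exI[of _ "n + \<bar>L\<bar>"] conjI ballI)
  fix x y assume xy: "x \<in> S" "y \<in> S"
  show "l1 x y - ereal (n + \<bar>L\<bar>) \<le> l2 (f x) (f y)"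
  proof (cases "ereal L \<le> l1 x y")
    case True
    have "l1 x y - ereal (n + \<bar>L\<bar>) \<le> l1 x y - ereal n"
      by (intro ereal_minus_mono) auto
    also have "\<dots> \<le> l2 (f x) (f y)"
      using assms(2)[OF xy True] .
    finally show ?thesis .
  next
    case False
    then have "l1 x y - ereal (n + \<bar>L\<bar>) \<le> 0"
      using \<open>n > 0\<close> by (cases "l1 x y") auto
    also have "\<dots> < l2 (f x) (f y)"
      using assms(3)[OF xy] .
    finally show ?thesis by simp
  qed
qed (use \<open>n > 0\<close> in simp)

theorem lemma1p1p7:
  fixes X1 :: "'a topology" and X2 :: "'b topology"
    and l1 :: "'a \<Rightarrow> 'a \<Rightarrow> ereal" and l2 :: "'b \<Rightarrow> 'b \<Rightarrow> ereal"
    and f :: "'a \<Rightarrow> 'b"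
  assumes "log_scale_on X1 l1" and "log_scale_on X2 l2"
    and "compact_space X1"
    and "positive_log_scale X2 l2"
    and "f \<in> topspace X1 \<rightarrow> topspace X2"
    and "locally_lipschitz_ls X1 l1 l2 f"
  shows "lipschitz_ls_on (topspace X1) l1 l2 f"
proof -
  define \<C> where "\<C> = {U. openin X1 U \<and> lipschitz_ls_on U l1 l2 f}"
  have "topspace X1 \<subseteq> \<Union>\<C>"
    using assms(6) unfolding locally_lipschitz_ls_def \<C>_def by blast
  moreover have "\<forall>U\<in>\<C>. openin X1 U"
    by (simp add: \<C>_def)
  ultimately obtain \<F> where \<F>: "finite \<F>" "\<F> \<subseteq> \<C>" "topspace X1 \<subseteq> \<Union>\<F>"
    using assms(3) unfolding compact_space_def compactin_def by meson
  obtain n where "n > 0" and n: "\<forall>U\<in>\<F>. \<forall>x\<in>U. \<forall>y\<in>U. l1 x y - ereal n \<le> l2 (f x) (f y)"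
    using lipschitz_ls_on_common_constant[OF \<F>(1), of l1 l2 f] \<F>(2) by (auto simp: \<C>_def)
  obtain L where L: "\<forall>x\<in>topspace X1. \<forall>y\<in>topspace X1.
                      ereal L \<le> l1 x y \<longrightarrow> (\<exists>U\<in>\<F>. x \<in> U \<and> y \<in> U)"
    using log_scale_lebesgue_number[OF assms(1,3), of \<F>] \<F> by (auto simp: \<C>_def)
  show ?thesis
  proof (rule lipschitz_ls_on_if_large_scales[OF \<open>n > 0\<close>, of _ L])
    show "l1 x y - ereal n \<le> l2 (f x) (f y)"
      if "x \<in> topspace X1" "y \<in> topspace X1" "ereal L \<le> l1 x y" for x y
      using L n that by blast
    show "0 < l2 (f x) (f y)" if "x \<in> topspace X1" "y \<in> topspace X1" for x y
      using assms(4,5) that unfolding positive_log_scale_def by blast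
  qed
qed

end
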